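(* Let $k\ge 1$, let $(\varphi,G,H)$ be a $k$-orbit-form and $\sigma$ a $k$-molecule over $I$. Then for every automorphism $\pi\in\mathrm{Aut}(I)$ we have $\pi\big((\varphi,G,H)*\sigma\big)=(\varphi,G,H)*\pi\sigma$.
   Context: $I$ is a finite set of atoms partitioned into a finite set $C$ of colours. $\mathrm{Sym}(I)$ is the group of all permutations of $I$, and $\mathrm{Aut}(I)\subseteq\mathrm{Sym}(I)$ the subgroup of permutations mapping each colour onto itself. Permutations act on hereditarily finite sets over $I$ by $\theta(x)=\{\theta(y)\mid y\in x\}$; for a set $G$ of permutations and object $x$, $G(x)=Gx=\{g(x)\mid g\in G\}$. A $k$-molecule is an injective map $\sigma:\{0,\dots,k-1\}\to I$; $\pi\sigma$ denotes composition. The configuration $\mathit{conf}(\sigma_0,\dots,\sigma_{\ell-1})$ of a sequence of $k$-molecules is the pair $(\sim,col)$ where $\sim$ is the equivalence relation on $\{0,\dots,\ell-1\}\times\{0,\dots,k-1\}$ with $(i,p)\sim(j,q)$ iff $\sigma_i(p)=\sigma_j(q)$, and $col(i,p)$ is the colour containing $\sigma_i(p)$. An abstract $\ell$-configuration is a pair $(\sim,col)$ with $\sim$ an equivalence relation on $\{0,\dots,\ell-1\}\times\{0,\dots,k-1\}$ such that $(i,p)\sim(i,q)\Leftrightarrow p=q$, and $col:\{0,\dots,\ell-1\}\times\{0,\dots,k-1\}\to C$ constant on $\sim$-classes. The $k$-forms form the smallest set containing new symbols $c_0,\dots,c_{k-1}$ and all finite sets $\{(\varphi_i,E_i)\mid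 1\le i\le n\}$ with $\varphi_i$ $k$-forms and $E_i$ abstract 2-configurations. For a $k$-form $\varphi$ and $k$-molecule $\sigma$: $c_p*\sigma=\sigma(p)$, and for $\varphi=\{(\varphi_i,E_i)\mid 1\le i\le n\}$, $\varphi*\sigma=\{\varphi_i*\tau\mid 1\le i\le n,\ \tau \text{ a }k\text{-molecule with } E_i=\mathit{conf}(\tau,\sigma)\}$. A $k$-orbit-form is a triple $(\varphi,G,H)$ with $\varphi$ a $k$-form and $H\subseteq G\subseteq\mathrm{Sym}(I)$ subgroups commuting with $\mathrm{Aut}(I)$ in the sense $\pi G=G\pi$ and $\pi H=H\pi$ for all $\pi\in\mathrm{Aut}(I)$. Define $(\varphi,G,H)*\sigma=G\big(\bigcup_{h\in H}\varphi*h\sigma\big)$, where for $\varphi=c_p$ and $H\neq 1$ the term $\varphi*h\sigma$ inside the union is understood as $\{c_p*h\sigma\}$. *)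

theory Defs
  imports Main "HOL-Library.FSet" "HOL-Library.Disjoint_Sets" "HOL-Combinatorics.Permutations"
begin

(* Hereditarily finite sets over atoms of type 'a *)
datatype 'a hf = Atom 'a | HSet "'a hf fset"

abbreviation hf_act :: "('a \<Rightarrow> 'a) \<Rightarrow> 'a hf \<Rightarrow> 'a hf" where
  "hf_act \<theta> x \<equiv> map_hf \<theta> x"

fun hf_elems :: "'a hf \<Rightarrow> 'a hf set" where
  "hf_elems (Atom a) = {}"
| "hf_elems (HSet s) = fset s"

definition hf_of_set :: "'a hf set \<Rightarrow> 'a hf" where
  "hf_of_set S = HSet (Abs_fset S)"

definition Sym :: "'a set \<Rightarrow> ('a \<Rightarrow> 'a) set" where
  "Sym I = {p. p permutes I}"

definition Aut :: "'a set \<Rightarrow> 'a set set \<Rightarrow> ('a \<Rightarrow> 'a) set" where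
  "Aut I Cs = {p \<in> Sym I. \<forall>c\<in>Cs. p ` c = c}"

definition sym_subgroup :: "'a set \<Rightarrow> ('a \<Rightarrow> 'a) set \<Rightarrow> bool" where
  "sym_subgroup I G \<longleftrightarrow> G \<subseteq> Sym I \<and> id \<in> G \<and>
     (\<forall>g\<in>G. \<forall>h\<in>G. g \<circ> h \<in> G) \<and> (\<forall>g\<in>G. inv g \<in> G)"

definition commutes_Aut :: "'a set \<Rightarrow> 'a set set \<Rightarrow> ('a \<Rightarrow> 'a) set \<Rightarrow> bool" where
  "commutes_Aut I Cs G \<longleftrightarrow> (\<forall>\<pi>\<in>Aut I Cs. (\<lambda>g. \<pi> \<circ> g) ` G = (\<lambda>g. g \<circ> \<pi>) ` G)"

(* a k-molecule: injective map {0..k-1} -> I, represented as a distinct list of length k *)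
definition molecule :: "'a set \<Rightarrow> nat \<Rightarrow> 'a list \<Rightarrow> bool" where
  "molecule I k \<sigma> \<longleftrightarrow> length \<sigma> = k \<and> distinct \<sigma> \<and> set \<sigma> \<subseteq> I"

(* configurations: equivalence relation on {0..l-1} x {0..k-1} and colouring
   (colouring is {} outside the domain, for a canonical representation) *)
type_synonym 'a config = "((nat \<times> nat) \<times> (nat \<times> nat)) set \<times> (nat \<times> nat \<Rightarrow> 'a set)"

definition conf :: "'a set set \<Rightarrow> nat \<Rightarrow> 'a list list \<Rightarrow> 'a config" where
  "conf Cs k ss =
     ({((i,p),(j,q)). i < length ss \<and> j < length ss \<and> p < k \<and> q < k \<and> ss!i!p = ss!j!q},
      (\<lambda>(i,p). if i < length ss \<and> p < k then (THE c. c \<in> Cs \<and> ss!i!p \<in> c) else {}))"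

definition abstract_conf :: "'a set set \<Rightarrow> nat \<Rightarrow> nat \<Rightarrow> 'a config \<Rightarrow> bool" where
  "abstract_conf Cs k l E \<longleftrightarrow>
     (let D = {..<l} \<times> {..<k}; R = fst E; col = snd E in
       equiv D R \<and>
       (\<forall>i<l. \<forall>p<k. \<forall>q<k. ((i,p),(i,q)) \<in> R \<longleftrightarrow> p = q) \<and>
       (\<forall>x\<in>D. col x \<in> Cs) \<and> (\<forall>x. x \<notin> D \<longrightarrow> col x = {}) \<and>
       (\<forall>(x,y)\<in>R. col x = col y))"

(* k-forms: symbols c_p, and finite sets of pairs (form, abstract 2-configuration) *)
datatype 'a form = C nat | Form "('a form \<times> 'a config) fset"

primrec wf_form :: "'a set set \<Rightarrow> nat \<Rightarrow> 'a form \<Rightarrow> bool" where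
  "wf_form Cs k (C p) = (p < k)"
| "wf_form Cs k (Form S) =
     (\<forall>(b,E)\<in>fset (fimage (map_prod (wf_form Cs k) id) S). b \<and> abstract_conf Cs k 2 E)"

primrec form_eval :: "'a set \<Rightarrow> 'a set set \<Rightarrow> nat \<Rightarrow> 'a form \<Rightarrow> 'a list \<Rightarrow> 'a hf" where
  "form_eval I Cs k (C p) = (\<lambda>\<sigma>. Atom (\<sigma> ! p))"
| "form_eval I Cs k (Form S) = (\<lambda>\<sigma>. hf_of_set
     (\<Union>(f,E)\<in>fset (fimage (map_prod (form_eval I Cs k) id) S).
        {f \<tau> | \<tau>. molecule I k \<tau> \<and> E = conf Cs k [\<tau>, \<sigma>]}))"

definition orbit_form :: "'a set \<Rightarrow> 'a set set \<Rightarrow> nat \<Rightarrow> 'a form \<Rightarrow> ('a \<Rightarrow> 'a) set \<Rightarrow> ('a \<Rightarrow> 'a) set \<Rightarrow> bool" where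
  "orbit_form I Cs k \<phi> G H \<longleftrightarrow> wf_form Cs k \<phi> \<and> sym_subgroup I G \<and> sym_subgroup I H \<and> H \<subseteq> G \<and>
     commutes_Aut I Cs G \<and> commutes_Aut I Cs H"

(* the union  U_{h in H} phi * h sigma, with the stated convention for phi = c_p *)
definition orbit_union :: "'a set \<Rightarrow> 'a set set \<Rightarrow> nat \<Rightarrow> 'a form \<Rightarrow> ('a \<Rightarrow> 'a) set \<Rightarrow> 'a list \<Rightarrow> 'a hf" where
  "orbit_union I Cs k \<phi> H \<sigma> =
     (case \<phi> of
        C p \<Rightarrow> (if H = {id} then form_eval I Cs k \<phi> \<sigma>
                 else hf_of_set {form_eval I Cs k \<phi> (map h \<sigma>) | h. h \<in> H})
      | Form S \<Rightarrow> hf_of_set (\<Union>h\<in>H. hf_elems (form_eval I Cs k \<phi> (map h \<sigma>))))"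

definition orbit_eval :: "'a set \<Rightarrow> 'a set set \<Rightarrow> nat \<Rightarrow> 'a form \<Rightarrow> ('a \<Rightarrow> 'a) set \<Rightarrow> ('a \<Rightarrow> 'a) set \<Rightarrow> 'a list \<Rightarrow> 'a hf" where
  "orbit_eval I Cs k \<phi> G H \<sigma> = hf_of_set ((\<lambda>g. hf_act g (orbit_union I Cs k \<phi> H \<sigma>)) ` G)"

end

theory Submission imports Defs begin

text \<open>An automorphism preserves every colour and is a bijection on molecules, so it maps
the molecules in a given configuration with \<open>\<sigma>\<close> onto those in the same configuration
with \<open>\<pi>\<sigma>\<close>; by induction on forms this gives \<open>\<pi>(\<phi> * \<sigma>) = \<phi> * \<pi>\<sigma>\<close>. For orbit-forms the
remaining step is to move \<open>\<pi>\<close> past the group elements: \<open>\<pi>g\<close> ranges over \<open>\<pi>G = G\<pi>\<close>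
exactly as \<open>g\<pi>\<close> does, and likewise for \<open>H\<close>.\<close>

lemma hf_act_hf_of_set:
  assumes "finite X"
  shows "hf_act \<pi> (hf_of_set X) = hf_of_set (hf_act \<pi> ` X)"
  using assms by (simp add: hf_of_set_def fimage.abs_eq eq_onp_def)

lemma hf_elems_hf_act: "hf_elems (hf_act \<pi> x) = hf_act \<pi> ` hf_elems x"
  by (cases x) simp_all

lemma finite_hf_elems: "finite (hf_elems x)"
  by (cases x) simp_all

lemma image_comp_commute:
  assumes "(\<lambda>g. \<pi> \<circ> g) ` G = (\<lambda>g. g \<circ> \<pi>) ` G"
  shows "(\<lambda>g. F (\<pi> \<circ> g)) ` G = (\<lambda>g. F (g \<circ> \<pi>)) ` G"
  using arg_cong[OF assms, of "image F"] by (simp add: image_image)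

lemma finite_sym_subgroup: "finite I \<Longrightarrow> sym_subgroup I G \<Longrightarrow> finite G"
  unfolding sym_subgroup_def Sym_def by (metis finite_permutations finite_subset)

lemma Aut_permutes: "\<pi> \<in> Aut I Cs \<Longrightarrow> \<pi> permutes I"
  by (simp add: Aut_def Sym_def)

lemma Aut_image_colour: "\<pi> \<in> Aut I Cs \<Longrightarrow> c \<in> Cs \<Longrightarrow> \<pi> ` c = c"
  by (simp add: Aut_def)

lemma Aut_inv:
  assumes "\<pi> \<in> Aut I Cs"
  shows "inv \<pi> \<in> Aut I Cs"
proof -
  have perm: "\<pi> permutes I" using assms by (rule Aut_permutes)
  have "inv \<pi> ` c = c" if "c \<in> Cs" for c
    using image_inv_f_f[OF permutes_inj[OF perm], of c] Aut_image_colour[OF assms that] by simp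
  with permutes_inv[OF perm] show ?thesis by (simp add: Aut_def Sym_def)
qed

lemma molecule_map_permutes: "\<pi> permutes I \<Longrightarrow> molecule I k \<tau> \<Longrightarrow> molecule I k (map \<pi> \<tau>)"
  unfolding molecule_def
  by (auto simp: distinct_map permutes_in_image inj_on_subset[OF permutes_inj])

lemma finite_molecules: "finite I \<Longrightarrow> finite {\<tau>. molecule I k \<tau>}"
  by (rule finite_subset[OF _ finite_lists_length_eq[of I k]]) (auto simp: molecule_def)

lemma conf_map_Aut:
  assumes "\<pi> \<in> Aut I Cs" and "\<forall>\<tau>\<in>set ss. k \<le> length \<tau>"
  shows "conf Cs k (map (map \<pi>) ss) = conf Cs k ss"
proof -
  have inj: "inj \<pi>" using permutes_inj[OF Aut_permutes[OF assms(1)]] .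
  have nth: "map \<pi> (ss ! i) ! p = \<pi> (ss ! i ! p)" if "i < length ss" "p < k" for i p
    using that assms(2) by (metis nth_map nth_mem order_less_le_trans)
  have colour: "(\<pi> x \<in> c) = (x \<in> c)" if "c \<in> Cs" for x c
    using Aut_image_colour[OF assms(1) that] inj by (metis imageE imageI inj_eq)
  then have "(THE c. c \<in> Cs \<and> \<pi> x \<in> c) = (THE c. c \<in> Cs \<and> x \<in> c)" for x
    by metis
  then show ?thesis
    unfolding conf_def by (auto simp: nth inj_eq[OF inj] fun_eq_iff)
qed

definition molecules_in_conf :: "'a set \<Rightarrow> 'a set set \<Rightarrow> nat \<Rightarrow> 'a config \<Rightarrow> 'a list \<Rightarrow> 'a list set" where
  "molecules_in_conf I Cs k E \<sigma> = {\<tau>. molecule I k \<tau> \<and> E = conf Cs k [\<tau>, \<sigma>]}"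

lemma form_eval_Form_molecules_in_conf:
  "form_eval I Cs k (Form S) \<sigma> =
     hf_of_set (\<Union>(\<psi>, E)\<in>fset S. form_eval I Cs k \<psi> ` molecules_in_conf I Cs k E \<sigma>)"
  by (simp add: molecules_in_conf_def image_image split_def setcompr_eq_image)

lemma map_Aut_molecules_in_conf_subset:
  assumes "\<pi> \<in> Aut I Cs" and "length \<sigma> = k"
  shows "map \<pi> ` molecules_in_conf I Cs k E \<sigma> \<subseteq> molecules_in_conf I Cs k E (map \<pi> \<sigma>)"
proof
  fix \<rho> assume "\<rho> \<in> map \<pi> ` molecules_in_conf I Cs k E \<sigma>"
  then obtain \<tau> where \<rho>: "\<rho> = map \<pi> \<tau>" and mol: "molecule I k \<tau>" and E: "E = conf Cs k [\<tau>, \<sigma>]"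
    by (auto simp: molecules_in_conf_def)
  have "conf Cs k [map \<pi> \<tau>, map \<pi> \<sigma>] = conf Cs k [\<tau>, \<sigma>]"
    using conf_map_Aut[OF assms(1), of "[\<tau>, \<sigma>]" k] mol assms(2) by (simp add: molecule_def)
  with molecule_map_permutes[OF Aut_permutes[OF assms(1)] mol] show "\<rho> \<in> molecules_in_conf I Cs k E (map \<pi> \<sigma>)"
    by (simp add: molecules_in_conf_def \<rho> E)
qed

lemma map_Aut_molecules_in_conf:
  assumes "\<pi> \<in> Aut I Cs" and "length \<sigma> = k"
  shows "map \<pi> ` molecules_in_conf I Cs k E \<sigma> = molecules_in_conf I Cs k E (map \<pi> \<sigma>)"
proof
  have inv_\<pi>: "inv \<pi> \<circ> \<pi> = id" "\<pi> \<circ> inv \<pi> = id"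
    using permutes_inv_o[OF Aut_permutes[OF assms(1)]] by simp_all
  have "molecules_in_conf I Cs k E (map \<pi> \<sigma>)
      = map \<pi> ` map (inv \<pi>) ` molecules_in_conf I Cs k E (map \<pi> \<sigma>)"
    by (simp add: image_image inv_\<pi>)
  also have "\<dots> \<subseteq> map \<pi> ` molecules_in_conf I Cs k E \<sigma>"
    using map_Aut_molecules_in_conf_subset[OF Aut_inv[OF assms(1)], of "map \<pi> \<sigma>" k E] assms(2)
    by (intro image_mono) (simp add: inv_\<pi>)
  finally show "molecules_in_conf I Cs k E (map \<pi> \<sigma>) \<subseteq> map \<pi> ` molecules_in_conf I Cs k E \<sigma>" .
qed (rule map_Aut_molecules_in_conf_subset[OF assms])

lemma form_eval_map_Aut:
  assumes "finite I" and "\<pi> \<in> Aut I Cs"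
  shows "wf_form Cs k \<phi> \<Longrightarrow> length \<sigma> = k \<Longrightarrow>
    hf_act \<pi> (form_eval I Cs k \<phi> \<sigma>) = form_eval I Cs k \<phi> (map \<pi> \<sigma>)"
proof (induction \<phi> arbitrary: \<sigma>)
  case (C p)
  then show ?case by simp
next
  case (Form S)
  have IH: "hf_act \<pi> (form_eval I Cs k \<psi> \<tau>) = form_eval I Cs k \<psi> (map \<pi> \<tau>)"
    if "(\<psi>, E) \<in> fset S" "\<tau> \<in> molecules_in_conf I Cs k E \<sigma>" for \<psi> E \<tau>
    using Form.IH[of "(\<psi>, E)" \<psi> \<tau>] Form.prems(1) that
    by (force simp: molecules_in_conf_def molecule_def split_def)
  have "finite (molecules_in_conf I Cs k E \<sigma>)" for E
    using finite_molecules[OF assms(1)] by (simp add: molecules_in_conf_def)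
  then have fin: "finite (\<Union>(\<psi>, E)\<in>fset S. form_eval I Cs k \<psi> ` molecules_in_conf I Cs k E \<sigma>)"
    by auto
  have "hf_act \<pi> ` (\<Union>(\<psi>, E)\<in>fset S. form_eval I Cs k \<psi> ` molecules_in_conf I Cs k E \<sigma>)
      = (\<Union>(\<psi>, E)\<in>fset S. form_eval I Cs k \<psi> ` map \<pi> ` molecules_in_conf I Cs k E \<sigma>)"
    unfolding image_UN image_image split_def using IH by (intro SUP_cong image_cong) auto
  also have "\<dots> = (\<Union>(\<psi>, E)\<in>fset S. form_eval I Cs k \<psi> ` molecules_in_conf I Cs k E (map \<pi> \<sigma>))"
    using map_Aut_molecules_in_conf[OF assms(2) Form.prems(2)] by simp
  finally show ?case
    unfolding form_eval_Form_molecules_in_conf hf_act_hf_of_set[OF fin] by simp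
qed

lemma orbit_union_map_Aut:
  assumes "finite I" and "\<pi> \<in> Aut I Cs" and "wf_form Cs k \<phi>"
    and "sym_subgroup I H" and "commutes_Aut I Cs H" and "length \<sigma> = k"
  shows "hf_act \<pi> (orbit_union I Cs k \<phi> H \<sigma>) = orbit_union I Cs k \<phi> H (map \<pi> \<sigma>)"
proof -
  have fin: "finite H" using finite_sym_subgroup[OF assms(1,4)] .
  have eval: "hf_act \<pi> (form_eval I Cs k \<phi> (map h \<sigma>)) = form_eval I Cs k \<phi> (map (\<pi> \<circ> h) \<sigma>)" for h
    using form_eval_map_Aut[OF assms(1-3)] assms(6) by simp
  have shift: "(\<lambda>h. F (map (\<pi> \<circ> h) \<sigma>)) ` H = (\<lambda>h. F (map h (map \<pi> \<sigma>))) ` H" for F :: "'a list \<Rightarrow> 'b"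
    using image_comp_commute[of \<pi> H "\<lambda>h. F (map h \<sigma>)"] assms(2,5) by (simp add: commutes_Aut_def)
  show ?thesis
  proof (cases \<phi>)
    case (C p)
    show ?thesis
    proof (cases "H = {id}")
      case True
      then show ?thesis using C eval[of id] by (simp add: orbit_union_def)
    next
      case False
      then have "orbit_union I Cs k \<phi> H \<tau> = hf_of_set ((\<lambda>h. form_eval I Cs k \<phi> (map h \<tau>)) ` H)"
        for \<tau> using C by (simp add: orbit_union_def setcompr_eq_image)
      then show ?thesis
        using fin shift[of "form_eval I Cs k \<phi>"] by (simp add: hf_act_hf_of_set image_image eval)
    qed
  next
    case (Form S)
    have "finite (\<Union>h\<in>H. hf_elems (form_eval I Cs k \<phi> (map h \<sigma>)))"
      using fin finite_hf_elems by blast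
    moreover have "orbit_union I Cs k \<phi> H \<tau> = hf_of_set (\<Union>h\<in>H. hf_elems (form_eval I Cs k \<phi> (map h \<tau>)))"
      for \<tau> using Form by (simp add: orbit_union_def)
    ultimately show ?thesis using shift[of "\<lambda>\<tau>. hf_elems (form_eval I Cs k \<phi> \<tau>)"]
      by (simp add: hf_act_hf_of_set image_UN flip: hf_elems_hf_act eval)
  qed
qed

theorem lemma6:
  fixes I :: "'a set" and Cs :: "'a set set" and k :: nat
    and \<phi> :: "'a form" and G H :: "('a \<Rightarrow> 'a) set" and \<sigma> :: "'a list" and \<pi> :: "'a \<Rightarrow> 'a"
  assumes "finite I" and "partition_on I Cs"
    and "k \<ge> 1"
    and "orbit_form I Cs k \<phi> G H"
    and "molecule I k \<sigma>"
    and "\<pi> \<in> Aut I Cs"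
  shows "hf_act \<pi> (orbit_eval I Cs k \<phi> G H \<sigma>) = orbit_eval I Cs k \<phi> G H (map \<pi> \<sigma>)"
proof -
  define U where "U = orbit_union I Cs k \<phi> H \<sigma>"
  have G: "sym_subgroup I G" "commutes_Aut I Cs G"
    using assms(4) by (simp_all add: orbit_form_def)
  have U_map: "orbit_union I Cs k \<phi> H (map \<pi> \<sigma>) = hf_act \<pi> U"
    using orbit_union_map_Aut[OF assms(1,6)] assms(4,5)
    by (simp add: U_def orbit_form_def molecule_def)
  have "hf_act \<pi> ` (\<lambda>g. hf_act g U) ` G = (\<lambda>g. hf_act (\<pi> \<circ> g) U) ` G"
    by (simp add: image_image hf.map_comp)
  also have "\<dots> = (\<lambda>g. hf_act (g \<circ> \<pi>) U) ` G"
    using image_comp_commute[of \<pi> G] G(2) assms(6) by (simp add: commutes_Aut_def)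
  finally show ?thesis
    using finite_sym_subgroup[OF assms(1) G(1)]
    by (simp add: orbit_eval_def U_map hf_act_hf_of_set flip: U_def hf.map_comp)
qed

end
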